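(* Assume Assumption 1, Assumption 2 and the null hypothesis $H_0:\ T_i(1)=T_i(0)$ for all $i$, and condition on all potential event times $\boldsymbol{T}(1),\boldsymbol{T}(0)$. Then (i) $\{D_{1k}-M_k\}_{k=1}^K$ is a martingale difference sequence with respect to the filtration $(\mathcal{F}_k)_{k}$; and (ii) for each $1\le k\le K$, conditional on $\mathcal{F}_{k-1}$, $D_{1k}$ is hypergeometric: $$D_{1k}\mid \boldsymbol{T}(1),\boldsymbol{T}(0),\mathcal{F}_{k-1}\ \sim\ \mathrm{HGeom}(N_k,D_k,N_{1k}).$$
   Context: There are $n$ units. Unit $i$ has potential event times $T_i(1),T_i(0)\ge 0$, potential censoring times $C_i(1),C_i(0)\in[0,\infty]$, and treatment indicator $Z_i\in\{0,1\}$; bold letters denote $n$-vectors. Assumption 1: conditional on $\boldsymbol{T}(1),\boldsymbol{T}(0),\boldsymbol{C}(1),\boldsymbol{C}(0)$, the $Z_i$ are i.i.d. Bernoulli$(p_1)$, $p_1=1-p_0\in(0,1)$. Assumption 2: $(\boldsymbol{C}(1),\boldsymbol{C}(0))$ is independent of $(\boldsymbol{T}(1),\boldsymbol{T}(0))$ and the pairs $(C_i(1),C_i(0))$ are i.i.d. across $i$. Realized: $T_i=Z_iT_i(1)+(1-Z_i)T_i(0)$, $C_i=Z_iC_i(1)+(1-Z_i)C_i(0)$, $W_i=\min\{T_i,C_i\}$, $\Delta_i=\mathbb{1}(T_i\le C_i)$. Let $t_1<\dots<t_K$ be the distinct values of $\{T_i(0):1\le i\le n\}$, and set $t_0=-\infty$,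 $t_{K+1}=\infty$. For $1\le k\le K$: $N_{1k}=\sum_iZ_i\mathbb{1}(W_i\ge t_k)$, $N_{0k}=\sum_i(1-Z_i)\mathbb{1}(W_i\ge t_k)$, $N_k=N_{1k}+N_{0k}$, $D_{1k}=\sum_iZ_i\Delta_i\mathbb{1}(W_i=t_k)$, $D_k=\sum_i\Delta_i\mathbb{1}(W_i=t_k)$, $M_k=D_kN_{1k}/N_k$ (with $0/0:=0$). For $0\le k\le K$, $\mathcal{F}_k$ is the $\sigma$-algebra generated by $\mathbb{1}(W_i\ge t_q)$, $\Delta_i\mathbb{1}(W_i=t_q)$, $Z_i\Delta_i\mathbb{1}(W_i=t_{q-1})$ and $\sum_{j=1}^nZ_j\mathbb{1}(W_j\ge t_q)$ for $1\le q\le k+1$, $1\le i\le n$. $\mathrm{HGeom}(m,k,b)$ is the hypergeometric distribution of the number of successes in $b$ draws without replacement from a population of size $m$ with $k$ successes. *)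

theory Defs
  imports "HOL-Probability.Probability"
begin

text \<open>Distinct values of T(0), sorted increasingly: t_1 < ... < t_K, with
  t_0 = -infinity and t_{K+1} = +infinity (and beyond).\<close>
definition Kdist :: "nat \<Rightarrow> (nat \<Rightarrow> real) \<Rightarrow> nat" where
  "Kdist n T0 = card (T0 ` {..<n})"

definition tpt :: "nat \<Rightarrow> (nat \<Rightarrow> real) \<Rightarrow> nat \<Rightarrow> ereal" where
  "tpt n T0 k = (if k = 0 then -\<infinity>
     else if k \<le> Kdist n T0 then ereal (sorted_list_of_set (T0 ` {..<n}) ! (k - 1))
     else \<infinity>)"

text \<open>Counting processes, for a fixed outcome: z = treatment indicators,
  w = observed times W_i, d = event indicators Delta_i, s = threshold t_k.\<close>
definition Nrisk1 :: "nat \<Rightarrow> (nat \<Rightarrow> bool) \<Rightarrow> (nat \<Rightarrow> ereal) \<Rightarrow> ereal \<Rightarrow> nat" where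
  "Nrisk1 n z w s = card {i \<in> {..<n}. z i \<and> s \<le> w i}"

definition Nrisk0 :: "nat \<Rightarrow> (nat \<Rightarrow> bool) \<Rightarrow> (nat \<Rightarrow> ereal) \<Rightarrow> ereal \<Rightarrow> nat" where
  "Nrisk0 n z w s = card {i \<in> {..<n}. \<not> z i \<and> s \<le> w i}"

definition Nrisk :: "nat \<Rightarrow> (nat \<Rightarrow> bool) \<Rightarrow> (nat \<Rightarrow> ereal) \<Rightarrow> ereal \<Rightarrow> nat" where
  "Nrisk n z w s = Nrisk1 n z w s + Nrisk0 n z w s"

definition Dev1 :: "nat \<Rightarrow> (nat \<Rightarrow> bool) \<Rightarrow> (nat \<Rightarrow> ereal) \<Rightarrow> (nat \<Rightarrow> bool) \<Rightarrow> ereal \<Rightarrow> nat" where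
  "Dev1 n z w d s = card {i \<in> {..<n}. z i \<and> d i \<and> w i = s}"

definition Dev :: "nat \<Rightarrow> (nat \<Rightarrow> ereal) \<Rightarrow> (nat \<Rightarrow> bool) \<Rightarrow> ereal \<Rightarrow> nat" where
  "Dev n w d s = card {i \<in> {..<n}. d i \<and> w i = s}"

text \<open>M_k = D_k N_{1k} / N_k, with 0/0 = 0 (real division by 0 gives 0).\<close>
definition Mexp :: "nat \<Rightarrow> (nat \<Rightarrow> bool) \<Rightarrow> (nat \<Rightarrow> ereal) \<Rightarrow> (nat \<Rightarrow> bool) \<Rightarrow> ereal \<Rightarrow> real" where
  "Mexp n z w d s = real (Dev n w d s) * real (Nrisk1 n z w s) / real (Nrisk n z w s)"

definition gen_sigma :: "'a measure \<Rightarrow> ('a \<Rightarrow> nat) set \<Rightarrow> 'a measure" where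
  "gen_sigma M fs = sigma (space M) (\<Union>f\<in>fs. {f -` A \<inter> space M | A. True})"

definition filt :: "'a measure \<Rightarrow> nat \<Rightarrow> (nat \<Rightarrow> real) \<Rightarrow> (nat \<Rightarrow> 'a \<Rightarrow> bool)
    \<Rightarrow> ('a \<Rightarrow> nat \<Rightarrow> ereal) \<Rightarrow> ('a \<Rightarrow> nat \<Rightarrow> bool) \<Rightarrow> nat \<Rightarrow> 'a measure" where
  "filt M n T0 Z W Del k = gen_sigma M
     ((\<Union>q\<in>{1..k+1}. \<Union>i\<in>{..<n}.
        {(\<lambda>\<omega>. of_bool (tpt n T0 q \<le> W \<omega> i)),
         (\<lambda>\<omega>. of_bool (Del \<omega> i \<and> W \<omega> i = tpt n T0 q)),
         (\<lambda>\<omega>. of_bool (Z i \<omega> \<and> Del \<omega> i \<and> W \<omega> i = tpt n T0 (q - 1)))})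
      \<union> (\<Union>q\<in>{1..k+1}. {(\<lambda>\<omega>. Nrisk1 n (\<lambda>j. Z j \<omega>) (W \<omega>) (tpt n T0 q))}))"

definition hgeom_pmf :: "nat \<Rightarrow> nat \<Rightarrow> nat \<Rightarrow> nat \<Rightarrow> real" where
  "hgeom_pmf m s b j =
     (if j \<le> b then real (s choose j) * real ((m - s) choose (b - j)) / real (m choose b) else 0)"

definition mds :: "'a measure \<Rightarrow> (nat \<Rightarrow> 'a measure) \<Rightarrow> (nat \<Rightarrow> 'a \<Rightarrow> real) \<Rightarrow> nat \<Rightarrow> bool" where
  "mds M F X K \<longleftrightarrow>
     (\<forall>k\<le>K. subalgebra M (F k)) \<and>
     (\<forall>k<K. sets (F k) \<subseteq> sets (F (Suc k))) \<and>
     (\<forall>k\<in>{1..K}. X k \<in> borel_measurable (F k) \<and> integrable M (X k) \<and>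
        (AE \<omega> in M. real_cond_exp M (F (k - 1)) (X k) \<omega> = 0))"

end

theory Submission
  imports Defs
begin

text \<open>
  Fix k and an atom E of the finite \<sigma>-algebra F_(k-1). On E the risk set R at t_k,
  the number m of treated units in R and the units of R with an event at t_k are
  determined, because under H0 the event times do not depend on treatment. By
  independence across units, the part of E on which the treated units of R form a
  given m-set z factors into an event about the units out of risk and one event per
  unit of R, whose probability depends only on whether the unit lies in z (censoring
  is identically distributed). So, given E, the treated part of R is uniform over the
  m-subsets of R, and D_1k is hypergeometric with mean D_k N_1k / N_k = M_k. Since
  F_(k-1) is atomic, conditional expectations are computed atom by atom.
\<close>

section \<open>Counting subsets of a given size\<close>

lemma card_subsets_Int_card:
  assumes R: "finite R" and D: "D \<subseteq> R" and j: "j \<le> m"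
  shows "card {z. z \<subseteq> R \<and> card z = m \<and> card (z \<inter> D) = j}
       = (card D choose j) * ((card R - card D) choose (m - j))"
proof -
  let ?A = "{z. z \<subseteq> R \<and> card z = m \<and> card (z \<inter> D) = j}"
  let ?B = "{a. a \<subseteq> D \<and> card a = j} \<times> {b. b \<subseteq> R - D \<and> card b = m - j}"
  have fD: "finite D" and fRD: "finite (R - D)" using R D finite_subset by auto
  have "bij_betw (\<lambda>z. (z \<inter> D, z - D)) ?A ?B"
  proof (rule bij_betw_byWitness[where f'="\<lambda>(a, b). a \<union> b"])
    show "(\<lambda>z. (z \<inter> D, z - D)) ` ?A \<subseteq> ?B"
    proof (rule image_subsetI)
      fix z assume z: "z \<in> ?A"
      then have "finite z" using R finite_subset by blast
      then have "card z = card (z \<inter> D) + card (z - D)"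
        by (metis Int_Diff_Un Int_Diff_disjoint card_Un_disjoint finite_Diff finite_Int)
      then show "(z \<inter> D, z - D) \<in> ?B" using z by auto
    qed
    show "(\<lambda>(a, b). a \<union> b) ` ?B \<subseteq> ?A"
    proof clarify
      fix a b assume a: "a \<subseteq> D" "j = card a" and b: "b \<subseteq> R - D" "card b = m - card a"
      have "finite a" using a(1) fD by (rule finite_subset)
      moreover have "finite b" using b(1) fRD by (rule finite_subset)
      moreover have "a \<inter> b = {}" "(a \<union> b) \<inter> D = a" using a b by auto
      ultimately show "a \<union> b \<subseteq> R \<and> card (a \<union> b) = m \<and> card ((a \<union> b) \<inter> D) = card a"
        using a b D j by (auto simp: card_Un_disjoint)
    qed
  qed auto
  then have "card ?A = card ?B" by (rule bij_betw_same_card)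
  also have "\<dots> = (card D choose j) * (card (R - D) choose (m - j))"
    using fD fRD by (simp add: card_cartesian_product n_subsets)
  finally show ?thesis using D fD by (simp add: card_Diff_subset)
qed

lemma card_subsets_containing:
  assumes R: "finite R" and i: "i \<in> R" and m: "1 \<le> m"
  shows "card {z. z \<subseteq> R \<and> card z = m \<and> i \<in> z} = (card R - 1) choose (m - 1)"
proof -
  let ?A = "{z. z \<subseteq> R \<and> card z = m \<and> i \<in> z}"
  let ?B = "{y. y \<subseteq> R - {i} \<and> card y = m - 1}"
  have "bij_betw (\<lambda>z. z - {i}) ?A ?B"
  proof (rule bij_betw_byWitness[where f'="insert i"])
    show "(\<lambda>z. z - {i}) ` ?A \<subseteq> ?B"
      using R by (auto dest: finite_subset)
    show "insert i ` ?B \<subseteq> ?A"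
    proof clarify
      fix y assume y: "y \<subseteq> R - {i}" "card y = m - 1"
      then have "finite y" "i \<notin> y" using R finite_subset by auto
      then show "insert i y \<subseteq> R \<and> card (insert i y) = m \<and> i \<in> insert i y"
        using y i m by auto
    qed
  qed auto
  then have "card ?A = card ?B" by (rule bij_betw_same_card)
  also have "\<dots> = card (R - {i}) choose (m - 1)" using R by (simp add: n_subsets)
  finally show ?thesis using i R by simp
qed

text \<open>Double counting of the pairs (z, i) with i \<in> z \<inter> D.\<close>
lemma sum_card_Int_subsets:
  assumes R: "finite R" and D: "D \<subseteq> R"
  shows "(\<Sum>z | z \<subseteq> R \<and> card z = m. card (z \<inter> D)) * card R = card D * m * (card R choose m)"
proof (cases "m = 0")
  case True
  have "{z. z \<subseteq> R \<and> card z = 0} = {{}}" using R by (auto dest: finite_subset)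
  then show ?thesis using True by simp
next
  case False
  let ?Z = "{z. z \<subseteq> R \<and> card z = m}"
  have fD: "finite D" using R D finite_subset by blast
  have "(\<Sum>z\<in>?Z. card (z \<inter> D)) = (\<Sum>z\<in>?Z. \<Sum>i\<in>D. of_bool (i \<in> z))"
    by (intro sum.cong refl) (simp add: fD sum_of_bool_eq Int_commute)
  also have "\<dots> = (\<Sum>i\<in>D. \<Sum>z\<in>?Z. of_bool (i \<in> z))" by (rule sum.swap)
  also have "\<dots> = (\<Sum>i\<in>D. card {z. z \<subseteq> R \<and> card z = m \<and> i \<in> z})"
  proof (intro sum.cong refl)
    fix i
    have "{z. z \<subseteq> R \<and> card z = m \<and> i \<in> z} = ?Z \<inter> {z. i \<in> z}" by blast
    then show "(\<Sum>z\<in>?Z. of_bool (i \<in> z)) = card {z. z \<subseteq> R \<and> card z = m \<and> i \<in> z}"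
      using R by (simp add: sum_of_bool_eq)
  qed
  also have "\<dots> = (\<Sum>i\<in>D. (card R - 1) choose (m - 1))"
    using R D False by (intro sum.cong refl card_subsets_containing) auto
  also have "\<dots> = card D * ((card R - 1) choose (m - 1))" by simp
  finally show ?thesis
    using False times_binomial_minus1_eq[of m "card R"] by (simp add: mult.assoc mult.left_commute)
qed

lemma card_subsets_Int_card_hgeom:
  assumes R: "finite R" and D: "D \<subseteq> R" and m: "m \<le> card R"
  shows "real (card {z. z \<subseteq> R \<and> card z = m \<and> card (z \<inter> D) = j})
       = real (card R choose m) * hgeom_pmf (card R) (card D) m j"
proof (cases "j \<le> m")
  case True
  have "card R choose m > 0" using m by simp
  then show ?thesis using card_subsets_Int_card[OF R D True] True by (simp add: hgeom_pmf_def)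
next
  case False
  have "card (z \<inter> D) \<le> card z" if "z \<subseteq> R" for z
    using that R by (meson card_mono finite_subset inf_le1)
  then have "{z. z \<subseteq> R \<and> card z = m \<and> card (z \<inter> D) = j} = {}" using False by force
  then have "card {z. z \<subseteq> R \<and> card z = m \<and> card (z \<inter> D) = j} = 0" by (simp only: card.empty)
  then show ?thesis using False by (simp add: hgeom_pmf_def)
qed

lemma sum_subsets_card_Int_centered:
  assumes R: "finite R" and D: "D \<subseteq> R"
  shows "(\<Sum>z | z \<subseteq> R \<and> card z = m. real (card (z \<inter> D)) - real (card D) * real m / real (card R)) = 0"
proof (cases "card R = 0")
  case True
  then have "D = {}" using R D by auto
  then show ?thesis by simp
next
  case False
  have "real (\<Sum>z | z \<subseteq> R \<and> card z = m. card (z \<inter> D)) * real (card R)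
      = real (card D) * real m * real (card R choose m)"
    using arg_cong[OF sum_card_Int_subsets[OF R D, of m], of real] by simp
  then have "(\<Sum>z | z \<subseteq> R \<and> card z = m. real (card (z \<inter> D)))
      = real (card R choose m) * (real (card D) * real m / real (card R))"
    using False by (simp add: field_simps)
  then show ?thesis using R by (simp add: sum_subtractf n_subsets)
qed

section \<open>Conditional expectation given a finitely generated \<sigma>-algebra\<close>

lemma (in finite_measure) integrable_finite_range:
  fixes f :: "'a \<Rightarrow> real"
  assumes "f \<in> borel_measurable M" "finite (f ` space M)"
  shows "integrable M f"
proof (rule integrable_const_bound[where B="Max (abs ` f ` space M)"])
  show "AE x in M. norm (f x) \<le> Max (abs ` f ` space M)"
    using assms(2) by (intro AE_I2) (simp add: Max_ge)
qed fact

lemma space_gen_sigma [simp]: "space (gen_sigma M fs) = space M"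
  unfolding gen_sigma_def by (rule space_measure_of) auto

lemma sets_gen_sigma:
  "sets (gen_sigma M fs) = sigma_sets (space M) (\<Union>f\<in>fs. {f -` A \<inter> space M | A. True})"
  unfolding gen_sigma_def by (rule sets_measure_of) auto

lemma measurable_gen_sigma: "f \<in> fs \<Longrightarrow> f \<in> measurable (gen_sigma M fs) (count_space UNIV)"
  by (rule measurableI) (auto simp: sets_gen_sigma intro: sigma_sets.Basic)

lemma pred_gen_sigma:
  assumes "(\<lambda>\<omega>. of_bool (P \<omega>) :: nat) \<in> fs"
  shows "Measurable.pred (gen_sigma M fs) P"
proof -
  have "Measurable.pred (gen_sigma M fs) (\<lambda>\<omega>. of_bool (P \<omega>) = (1::nat))"
    using measurable_gen_sigma[OF assms] by (rule pred_eq_const1) simp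
  moreover have "(\<lambda>\<omega>. of_bool (P \<omega>) = (1::nat)) = P"
    by (rule ext) (simp add: of_bool_def)
  ultimately show ?thesis by (simp only:)
qed

lemma subalgebra_gen_sigma:
  assumes "\<And>f. f \<in> fs \<Longrightarrow> f \<in> measurable M (count_space UNIV)"
  shows "subalgebra M (gen_sigma M fs)"
  unfolding subalgebra_def sets_gen_sigma
  using assms by (auto intro!: sets.sigma_sets_subset measurable_sets)

lemma sets_gen_sigma_mono: "fs \<subseteq> gs \<Longrightarrow> sets (gen_sigma M fs) \<subseteq> sets (gen_sigma M gs)"
  unfolding sets_gen_sigma by (rule sigma_sets_mono') blast

definition gen_atom :: "'a measure \<Rightarrow> ('a \<Rightarrow> nat) set \<Rightarrow> 'a \<Rightarrow> 'a set" where
  "gen_atom M fs \<omega>0 = {\<omega> \<in> space M. \<forall>f\<in>fs. f \<omega> = f \<omega>0}"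

lemma gen_atom_eq: "\<omega> \<in> gen_atom M fs \<omega>0 \<Longrightarrow> gen_atom M fs \<omega> = gen_atom M fs \<omega>0"
  by (auto simp: gen_atom_def)

lemma sets_gen_atom:
  assumes "finite fs" and [measurable]: "\<And>f. f \<in> fs \<Longrightarrow> f \<in> measurable M (count_space UNIV)"
  shows "gen_atom M fs \<omega>0 \<in> sets M"
  unfolding gen_atom_def using assms(1) by measurable

lemma gen_atom_subset:
  assumes "A \<in> sets (gen_sigma M fs)" "\<omega>0 \<in> A"
  shows "gen_atom M fs \<omega>0 \<subseteq> A"
proof -
  have "\<forall>\<omega>\<in>space M. \<forall>\<omega>'\<in>gen_atom M fs \<omega>. \<omega> \<in> A \<longleftrightarrow> \<omega>' \<in> A"
    using assms(1) unfolding sets_gen_sigma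
    by induction (auto simp: gen_atom_def)
  moreover have "\<omega>0 \<in> space M"
    using assms sets.sets_into_space by fastforce
  ultimately show ?thesis using assms(2) by blast
qed

lemma finite_gen_atoms:
  assumes "finite fs" "\<And>f. f \<in> fs \<Longrightarrow> finite (f ` space M)"
  shows "finite (gen_atom M fs ` space M)"
proof (rule finite_subset)
  show "gen_atom M fs ` space M
      \<subseteq> (\<lambda>g. {\<omega> \<in> space M. \<forall>f\<in>fs. f \<omega> = g f}) ` PiE fs (\<lambda>f. f ` space M)"
    unfolding gen_atom_def by (rule image_subsetI, rule image_eqI[of _ _ "restrict (\<lambda>f. f _) fs"]) auto
  show "finite \<dots>" by (rule finite_imageI, rule finite_PiE) (use assms in auto)
qed

lemma disjoint_gen_atoms: "disjoint_family_on (\<lambda>a. a) (gen_atom M fs ` S)"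
  unfolding disjoint_family_on_def
proof (intro ballI impI)
  fix a b assume "a \<in> gen_atom M fs ` S" "b \<in> gen_atom M fs ` S" "a \<noteq> b"
  then obtain \<omega>1 \<omega>2 where a: "a = gen_atom M fs \<omega>1" and b: "b = gen_atom M fs \<omega>2" by blast
  show "a \<inter> b = {}"
  proof (rule ccontr)
    assume "a \<inter> b \<noteq> {}"
    then obtain x where "x \<in> a" "x \<in> b" by blast
    then have "a = b" using gen_atom_eq unfolding a b by metis
    then show False using \<open>a \<noteq> b\<close> by contradiction
  qed
qed

lemma set_integral_gen_sigma_atoms:
  fixes g :: "'a \<Rightarrow> real"
  assumes fs: "finite fs"
    and meas: "\<And>f. f \<in> fs \<Longrightarrow> f \<in> measurable M (count_space UNIV)"
    and fin: "\<And>f. f \<in> fs \<Longrightarrow> finite (f ` space M)"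
    and A: "A \<in> sets (gen_sigma M fs)" and g: "integrable M g"
  shows "(LINT x:A|M. g x) = (\<Sum>a\<in>gen_atom M fs ` A. LINT x:a|M. g x)"
proof -
  have "A \<subseteq> space M" using sets.sets_into_space[OF A] by simp
  then have A_eq: "(\<Union>a\<in>gen_atom M fs ` A. a) = A"
    using gen_atom_subset[OF A] by (auto simp: gen_atom_def)
  have "finite (gen_atom M fs ` space M)" using fs fin by (rule finite_gen_atoms)
  then have "finite (gen_atom M fs ` A)" using \<open>A \<subseteq> space M\<close> by (metis finite_subset image_mono)
  moreover have atoms: "a \<in> sets M" if "a \<in> gen_atom M fs ` A" for a
    using that sets_gen_atom[OF fs meas] by blast
  moreover have "set_integrable M a g" if "a \<in> gen_atom M fs ` A" for a
    unfolding set_integrable_def using atoms[OF that] g by (rule integrable_mult_indicator)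
  ultimately show ?thesis
    using disjoint_gen_atoms by (subst A_eq[symmetric], intro set_integral_finite_Union)
qed

text \<open>A finitely generated \<sigma>-algebra is atomic, so a conditional expectation
  with respect to it is determined by its integrals over the atoms.\<close>
lemma real_cond_exp_gen_sigma:
  fixes X h :: "'a \<Rightarrow> real"
  assumes "prob_space M" and fs: "finite fs"
    and meas: "\<And>f. f \<in> fs \<Longrightarrow> f \<in> measurable M (count_space UNIV)"
    and fin: "\<And>f. f \<in> fs \<Longrightarrow> finite (f ` space M)"
    and X: "integrable M X" and h: "integrable M h" "h \<in> borel_measurable (gen_sigma M fs)"
    and atoms: "\<And>\<omega>0. \<omega>0 \<in> space M \<Longrightarrow>
       (LINT \<omega>:gen_atom M fs \<omega>0|M. X \<omega>) = (LINT \<omega>:gen_atom M fs \<omega>0|M. h \<omega>)"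
  shows "AE \<omega> in M. real_cond_exp M (gen_sigma M fs) X \<omega> = h \<omega>"
proof -
  interpret prob_space M by fact
  interpret finite_measure_subalgebra M "gen_sigma M fs"
    by unfold_locales (rule subalgebra_gen_sigma[OF meas])
  show ?thesis
  proof (rule real_cond_exp_charact)
    fix A assume A: "A \<in> sets (gen_sigma M fs)"
    then have "A \<subseteq> space M" using sets.sets_into_space by fastforce
    then have "(\<Sum>a\<in>gen_atom M fs ` A. LINT x:a|M. X x) = (\<Sum>a\<in>gen_atom M fs ` A. LINT x:a|M. h x)"
      using atoms by (intro sum.cong) auto
    then show "(LINT x:A|M. X x) = (LINT x:A|M. h x)"
      by (simp add: set_integral_gen_sigma_atoms[OF fs meas fin A] X h)
  qed (use X h in auto)
qed

section \<open>The randomized trial under the null hypothesis\<close>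

lemma Nrisk_eq_card: "Nrisk n z w s = card {i\<in>{..<n}. s \<le> w i}"
  unfolding Nrisk_def Nrisk1_def Nrisk0_def
  by (subst card_Un_disjoint[symmetric]) (auto intro!: arg_cong[where f=card])

lemma card_Collect_lessThan_le: "card {i\<in>{..<n}. P i} \<le> n"
  by (rule order.trans[OF card_mono[of "{..<n}"]]) auto

lemma Nrisk_le: "Nrisk n z w s \<le> n"
  unfolding Nrisk_eq_card by (rule card_Collect_lessThan_le)

lemma Nrisk1_le: "Nrisk1 n z w s \<le> n"
  using Nrisk_le[of n z w s] unfolding Nrisk_def by linarith

lemma Dev_le: "Dev n w d s \<le> n"
  unfolding Dev_def by (rule card_Collect_lessThan_le)

lemma Dev1_le: "Dev1 n z w d s \<le> n"
  unfolding Dev1_def by (rule card_Collect_lessThan_le)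

lemma tpt_strict_mono:
  assumes "q < k" "k \<le> Kdist n T0"
  shows "tpt n T0 q < tpt n T0 k"
proof (cases "q = 0")
  case True
  then show ?thesis using assms by (simp add: tpt_def)
next
  case False
  let ?L = "sorted_list_of_set (T0 ` {..<n})"
  have "length ?L = Kdist n T0" by (simp add: Kdist_def)
  then have "?L ! (q - 1) < ?L ! (k - 1)"
    using assms False by (intro sorted_wrt_nth_less[OF strict_sorted_list_of_set]) auto
  then show ?thesis using assms False by (simp add: tpt_def)
qed

locale null_censored_trial = prob_space M for M :: "'a measure" +
  fixes n :: nat and p1 :: real and T1 T0 :: "nat \<Rightarrow> real"
    and Z :: "nat \<Rightarrow> 'a \<Rightarrow> bool"
    and C1 C0 :: "nat \<Rightarrow> 'a \<Rightarrow> ereal"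
    and W :: "'a \<Rightarrow> nat \<Rightarrow> ereal" and Del :: "'a \<Rightarrow> nat \<Rightarrow> bool"
  assumes H0: "\<And>i. i < n \<Longrightarrow> T1 i = T0 i"
    and Z_measurable: "\<And>i. i < n \<Longrightarrow> Z i \<in> measurable M (count_space UNIV)"
    and C_measurable: "\<And>i. i < n \<Longrightarrow> (\<lambda>\<omega>. (C1 i \<omega>, C0 i \<omega>)) \<in> borel_measurable M"
    and Z_indep: "indep_vars (\<lambda>_. count_space UNIV) Z {..<n}"
    and Z_bernoulli: "\<And>i. i < n \<Longrightarrow> prob {\<omega> \<in> space M. Z i \<omega>} = p1"
    and C_indep: "indep_vars (\<lambda>_. borel) (\<lambda>i \<omega>. (C1 i \<omega>, C0 i \<omega>)) {..<n}"
    and C_ident: "\<And>i. i < n \<Longrightarrow>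
       distr M borel (\<lambda>\<omega>. (C1 i \<omega>, C0 i \<omega>)) = distr M borel (\<lambda>\<omega>. (C1 0 \<omega>, C0 0 \<omega>))"
    and Z_C_indep: "indep_set
       {(\<lambda>\<omega>. \<lambda>i\<in>{..<n}. Z i \<omega>) -` A \<inter> space M | A.
          A \<in> sets (Pi\<^sub>M {..<n} (\<lambda>_. count_space UNIV))}
       {(\<lambda>\<omega>. \<lambda>i\<in>{..<n}. (C1 i \<omega>, C0 i \<omega>)) -` B \<inter> space M | B.
          B \<in> sets (Pi\<^sub>M {..<n} (\<lambda>_. borel))}"
    and W_def: "W = (\<lambda>\<omega> i. min (ereal (if Z i \<omega> then T1 i else T0 i))
                              (if Z i \<omega> then C1 i \<omega> else C0 i \<omega>))"
    and Del_def: "Del = (\<lambda>\<omega> i. ereal (if Z i \<omega> then T1 i else T0 i)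
                              \<le> (if Z i \<omega> then C1 i \<omega> else C0 i \<omega>))"
begin

abbreviation t :: "nat \<Rightarrow> ereal" where "t q \<equiv> tpt n T0 q"
abbreviation N1 :: "nat \<Rightarrow> 'a \<Rightarrow> nat" where "N1 k \<omega> \<equiv> Nrisk1 n (\<lambda>i. Z i \<omega>) (W \<omega>) (t k)"
abbreviation N :: "nat \<Rightarrow> 'a \<Rightarrow> nat" where "N k \<omega> \<equiv> Nrisk n (\<lambda>i. Z i \<omega>) (W \<omega>) (t k)"
abbreviation D1 :: "nat \<Rightarrow> 'a \<Rightarrow> nat" where "D1 k \<omega> \<equiv> Dev1 n (\<lambda>i. Z i \<omega>) (W \<omega>) (Del \<omega>) (t k)"
abbreviation D :: "nat \<Rightarrow> 'a \<Rightarrow> nat" where "D k \<omega> \<equiv> Dev n (W \<omega>) (Del \<omega>) (t k)"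
abbreviation Mk :: "nat \<Rightarrow> 'a \<Rightarrow> real" where "Mk k \<omega> \<equiv> Mexp n (\<lambda>i. Z i \<omega>) (W \<omega>) (Del \<omega>) (t k)"

definition cens :: "nat \<Rightarrow> 'a \<Rightarrow> ereal \<times> ereal" where "cens i \<omega> = (C1 i \<omega>, C0 i \<omega>)"

definition cens_obs :: "nat \<Rightarrow> 'a \<Rightarrow> ereal" where
  "cens_obs i \<omega> = (if Z i \<omega> then C1 i \<omega> else C0 i \<omega>)"

lemma W_eq: "i < n \<Longrightarrow> W \<omega> i = min (ereal (T0 i)) (cens_obs i \<omega>)"
  unfolding W_def cens_obs_def using H0 by simp

lemma Del_eq: "i < n \<Longrightarrow> Del \<omega> i \<longleftrightarrow> ereal (T0 i) \<le> cens_obs i \<omega>"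
  unfolding Del_def cens_obs_def using H0 by simp

lemma measurable_cens [measurable]: "i < n \<Longrightarrow> cens i \<in> borel_measurable M"
  unfolding cens_def by (rule C_measurable)

lemma measurable_W_Del:
  assumes [measurable]: "Z i \<in> measurable L (count_space UNIV)" "cens i \<in> borel_measurable L"
  shows "(\<lambda>\<omega>. W \<omega> i) \<in> borel_measurable L" "Measurable.pred L (\<lambda>\<omega>. Del \<omega> i)"
proof -
  have "(\<lambda>\<omega>. fst (cens i \<omega>)) \<in> borel_measurable L" "(\<lambda>\<omega>. snd (cens i \<omega>)) \<in> borel_measurable L"
    using continuous_on_fst[OF continuous_on_id] continuous_on_snd[OF continuous_on_id]
    by (auto intro!: measurable_compose[OF assms(2)] borel_measurable_continuous_onI)
  then have [measurable]: "C1 i \<in> borel_measurable L" "C0 i \<in> borel_measurable L"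
    by (simp_all add: cens_def)
  show "(\<lambda>\<omega>. W \<omega> i) \<in> borel_measurable L" "Measurable.pred L (\<lambda>\<omega>. Del \<omega> i)"
    unfolding W_def Del_def by measurable
qed

lemmas measurable_W_Del_M [measurable] = measurable_W_Del[OF Z_measurable measurable_cens]
declare Z_measurable [measurable]

definition unit_events :: "nat \<Rightarrow> 'a set set" where
  "unit_events i = {Z i -` a \<inter> cens i -` b \<inter> space M | a b. b \<in> sets borel}"

lemma prob_Z_cens_split:
  assumes J: "J \<subseteq> {..<n}" "finite J" and b: "\<And>j. j \<in> J \<Longrightarrow> b j \<in> sets borel"
  shows "prob {\<omega>\<in>space M. \<forall>j\<in>J. Z j \<omega> \<in> a j \<and> cens j \<omega> \<in> b j}
       = prob {\<omega>\<in>space M. \<forall>j\<in>J. Z j \<omega> \<in> a j} * prob {\<omega>\<in>space M. \<forall>j\<in>J. cens j \<omega> \<in> b j}"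
proof -
  let ?ZJ = "prod_emb {..<n} (\<lambda>_. count_space UNIV) J (PiE J a)"
  let ?CJ = "prod_emb {..<n} (\<lambda>_. borel) J (PiE J b)"
  have "?ZJ \<in> sets (Pi\<^sub>M {..<n} (\<lambda>_. count_space UNIV))"
    using J by (auto intro!: sets_PiM_I)
  moreover have "(\<lambda>\<omega>. \<lambda>i\<in>{..<n}. Z i \<omega>) -` ?ZJ \<inter> space M = {\<omega>\<in>space M. \<forall>j\<in>J. Z j \<omega> \<in> a j}"
    using J by (auto simp: prod_emb_def PiE_iff subset_iff)
  ultimately have Z_event: "{\<omega>\<in>space M. \<forall>j\<in>J. Z j \<omega> \<in> a j} \<in> {(\<lambda>\<omega>. \<lambda>i\<in>{..<n}. Z i \<omega>) -` A \<inter> space M | A.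
      A \<in> sets (Pi\<^sub>M {..<n} (\<lambda>_. count_space UNIV))}"
    by blast
  have "?CJ \<in> sets (Pi\<^sub>M {..<n} (\<lambda>_. borel))"
    using J b by (auto intro!: sets_PiM_I)
  moreover have "(\<lambda>\<omega>. \<lambda>i\<in>{..<n}. (C1 i \<omega>, C0 i \<omega>)) -` ?CJ \<inter> space M = {\<omega>\<in>space M. \<forall>j\<in>J. cens j \<omega> \<in> b j}"
    using J by (auto simp: prod_emb_def PiE_iff cens_def subset_iff)
  ultimately have C_event: "{\<omega>\<in>space M. \<forall>j\<in>J. cens j \<omega> \<in> b j} \<in> {(\<lambda>\<omega>. \<lambda>i\<in>{..<n}. (C1 i \<omega>, C0 i \<omega>)) -` B \<inter> space M | B.
      B \<in> sets (Pi\<^sub>M {..<n} (\<lambda>_. borel))}"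
    by blast
  have "{\<omega>\<in>space M. \<forall>j\<in>J. Z j \<omega> \<in> a j \<and> cens j \<omega> \<in> b j}
     = {\<omega>\<in>space M. \<forall>j\<in>J. Z j \<omega> \<in> a j} \<inter> {\<omega>\<in>space M. \<forall>j\<in>J. cens j \<omega> \<in> b j}" by blast
  then show ?thesis using indep_setD[OF Z_C_indep Z_event C_event] by simp
qed

lemma prob_Z_cens_prod:
  assumes J: "J \<subseteq> {..<n}" "finite J" and b: "\<And>j. j \<in> J \<Longrightarrow> b j \<in> sets borel"
  shows "prob {\<omega>\<in>space M. \<forall>j\<in>J. Z j \<omega> \<in> a j \<and> cens j \<omega> \<in> b j}
       = (\<Prod>j\<in>J. prob {\<omega>\<in>space M. Z j \<omega> \<in> a j} * prob {\<omega>\<in>space M. cens j \<omega> \<in> b j})"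
proof (cases "J = {}")
  case True
  then show ?thesis by (simp add: prob_space)
next
  case False
  have "prob (\<Inter>j\<in>J. Z j -` a j \<inter> space M) = (\<Prod>j\<in>J. prob (Z j -` a j \<inter> space M))"
    using J False by (intro indep_varsD[OF Z_indep]) auto
  moreover have "prob (\<Inter>j\<in>J. cens j -` b j \<inter> space M) = (\<Prod>j\<in>J. prob (cens j -` b j \<inter> space M))"
    using J False b indep_varsD[OF C_indep, of J b] by (simp add: cens_def[abs_def])
  moreover have "(\<Inter>j\<in>J. Z j -` a j \<inter> space M) = {\<omega>\<in>space M. \<forall>j\<in>J. Z j \<omega> \<in> a j}"
    "(\<Inter>j\<in>J. cens j -` b j \<inter> space M) = {\<omega>\<in>space M. \<forall>j\<in>J. cens j \<omega> \<in> b j}"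
    using False by auto
  ultimately show ?thesis
    using prob_Z_cens_split[OF J b] by (simp add: prod.distrib vimage_def Int_def conj_commute)
qed

lemma unit_events_subset_events: "i < n \<Longrightarrow> unit_events i \<subseteq> events"
proof
  fix x assume i: "i < n" and "x \<in> unit_events i"
  then obtain a b where b: "b \<in> sets borel" and "x = Z i -` a \<inter> cens i -` b \<inter> space M"
    unfolding unit_events_def mem_Collect_eq by (elim exE conjE)
  then have "x = (Z i -` a \<inter> space M) \<inter> (cens i -` b \<inter> space M)" by blast
  then show "x \<in> events"
    using measurable_sets[OF Z_measurable[OF i], of a] measurable_sets[OF measurable_cens[OF i] b] by auto
qed

lemma indep_unit_events: "indep_sets unit_events {..<n}"
proof (rule indep_setsI)
  show "unit_events i \<subseteq> events" if "i \<in> {..<n}" for i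
    using that unit_events_subset_events by simp
next
  fix A J assume J: "J \<noteq> {}" "J \<subseteq> {..<n}" "finite J" and A: "\<forall>j\<in>J. A j \<in> unit_events j"
  have "\<forall>j\<in>J. \<exists>ab. snd ab \<in> sets borel \<and> A j = {\<omega>\<in>space M. Z j \<omega> \<in> fst ab \<and> cens j \<omega> \<in> snd ab}"
  proof
    fix j assume "j \<in> J"
    with A have "A j \<in> unit_events j" by blast
    then obtain a b where "b \<in> sets borel" "A j = Z j -` a \<inter> cens j -` b \<inter> space M"
      unfolding unit_events_def mem_Collect_eq by (elim exE conjE)
    then show "\<exists>ab. snd ab \<in> sets borel \<and> A j = {\<omega>\<in>space M. Z j \<omega> \<in> fst ab \<and> cens j \<omega> \<in> snd ab}"
      by (intro exI[of _ "(a, b)"]) auto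
  qed
  from bchoice[OF this] obtain ab where ab: "\<forall>j\<in>J. snd (ab j) \<in> sets borel
      \<and> A j = {\<omega>\<in>space M. Z j \<omega> \<in> fst (ab j) \<and> cens j \<omega> \<in> snd (ab j)}"
    by blast
  have "(\<Inter>j\<in>J. A j) = {\<omega>\<in>space M. \<forall>j\<in>J. Z j \<omega> \<in> fst (ab j) \<and> cens j \<omega> \<in> snd (ab j)}"
    using J(1) ab by auto
  also have "prob \<dots> = (\<Prod>j\<in>J. prob {\<omega>\<in>space M. Z j \<omega> \<in> fst (ab j)} * prob {\<omega>\<in>space M. cens j \<omega> \<in> snd (ab j)})"
    using J ab by (intro prob_Z_cens_prod) auto
  also have "\<dots> = (\<Prod>j\<in>J. prob (A j))"
  proof (rule prod.cong[OF refl])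
    fix j assume "j \<in> J"
    then show "prob {\<omega>\<in>space M. Z j \<omega> \<in> fst (ab j)} * prob {\<omega>\<in>space M. cens j \<omega> \<in> snd (ab j)} = prob (A j)"
      using prob_Z_cens_prod[of "{j}" "\<lambda>_. snd (ab j)" "\<lambda>_. fst (ab j)"] J ab by (simp add: subset_iff)
  qed
  finally show "prob (\<Inter>j\<in>J. A j) = (\<Prod>j\<in>J. prob (A j))" .
qed

lemma prob_unit_event:
  assumes i: "i < n" and b: "b \<in> sets borel"
  shows "prob (Z i -` {v} \<inter> cens i -` b \<inter> space M)
       = (if v then p1 else 1 - p1) * measure (distr M borel (cens 0)) b"
proof -
  have "Z i -` {v} \<inter> cens i -` b \<inter> space M = {\<omega>\<in>space M. \<forall>j\<in>{i}. Z j \<omega> \<in> {v} \<and> cens j \<omega> \<in> b}"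
    by auto
  then have "prob (Z i -` {v} \<inter> cens i -` b \<inter> space M)
      = prob {\<omega>\<in>space M. Z i \<omega> \<in> {v}} * prob {\<omega>\<in>space M. cens i \<omega> \<in> b}"
    using prob_Z_cens_prod[of "{i}" "\<lambda>_. b" "\<lambda>_. {v}"] i b by simp
  moreover have "prob {\<omega>\<in>space M. cens i \<omega> \<in> b} = measure (distr M borel (cens i)) b"
    using measure_distr[OF measurable_cens[OF i] b] by (simp add: vimage_def Int_def conj_commute)
  moreover have "distr M borel (cens i) = distr M borel (cens 0)"
    using C_ident[OF i] by (simp add: cens_def[abs_def])
  moreover have "prob {\<omega>\<in>space M. Z i \<omega> \<in> {v}} = (if v then p1 else 1 - p1)"
  proof (cases v)
    case False
    have "{\<omega>\<in>space M. Z i \<omega> \<in> {v}} = space M - {\<omega>\<in>space M. Z i \<omega>}" using False by auto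
    moreover have "{\<omega>\<in>space M. Z i \<omega>} \<in> events" using i by measurable
    ultimately show ?thesis using prob_compl Z_bernoulli[OF i] False by simp
  qed (use Z_bernoulli[OF i] in simp)
  ultimately show ?thesis by simp
qed

lemma Int_stable_unit_events: "Int_stable (unit_events i)"
proof (rule Int_stableI)
  fix x y assume "x \<in> unit_events i" "y \<in> unit_events i"
  then obtain a b a' b' where "b \<in> sets borel" "b' \<in> sets borel"
    and "x = Z i -` a \<inter> cens i -` b \<inter> space M" "y = Z i -` a' \<inter> cens i -` b' \<inter> space M"
    unfolding unit_events_def mem_Collect_eq by (elim exE conjE)
  then show "x \<inter> y \<in> unit_events i"
    unfolding unit_events_def by (intro CollectI exI[of _ "a \<inter> a'"] exI[of _ "b \<inter> b'"]) auto
qed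

lemma measurable_unit_sigma:
  assumes "i \<in> I"
  shows "Z i \<in> measurable (sigma (space M) (\<Union>i\<in>I. unit_events i)) (count_space UNIV)"
    and "cens i \<in> borel_measurable (sigma (space M) (\<Union>i\<in>I. unit_events i))"
proof -
  have sub: "(\<Union>i\<in>I. unit_events i) \<subseteq> Pow (space M)"
    unfolding unit_events_def by blast
  have "Z i -` a \<inter> space M \<in> unit_events i" for a
    unfolding unit_events_def by (rule CollectI, rule exI[of _ a], rule exI[of _ UNIV]) auto
  then show "Z i \<in> measurable (sigma (space M) (\<Union>i\<in>I. unit_events i)) (count_space UNIV)"
    using assms by (intro measurableI) (auto simp: sets_measure_of[OF sub] space_measure_of[OF sub])
  have "cens i -` b \<inter> space M \<in> unit_events i" if "b \<in> sets borel" for b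
    unfolding unit_events_def using that by (intro CollectI exI[of _ UNIV] exI[of _ b]) auto
  then show "cens i \<in> borel_measurable (sigma (space M) (\<Union>i\<in>I. unit_events i))"
    using assms by (intro measurableI) (auto simp: sets_measure_of[OF sub] space_measure_of[OF sub])
qed

definition filt_gens :: "nat \<Rightarrow> ('a \<Rightarrow> nat) set" where
  "filt_gens k = (\<Union>q\<in>{1..k+1}. \<Union>i\<in>{..<n}.
        {(\<lambda>\<omega>. of_bool (t q \<le> W \<omega> i)),
         (\<lambda>\<omega>. of_bool (Del \<omega> i \<and> W \<omega> i = t q)),
         (\<lambda>\<omega>. of_bool (Z i \<omega> \<and> Del \<omega> i \<and> W \<omega> i = t (q - 1)))})
      \<union> (\<Union>q\<in>{1..k+1}. {N1 q})"

lemma filt_eq: "filt M n T0 Z W Del k = gen_sigma M (filt_gens k)"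
  unfolding filt_def filt_gens_def ..

lemma finite_filt_gens: "finite (filt_gens k)"
  unfolding filt_gens_def by simp

lemma filt_gens_mono: "k \<le> k' \<Longrightarrow> filt_gens k \<subseteq> filt_gens k'"
  unfolding filt_gens_def by (intro Un_mono UN_mono order.refl) auto

lemma measurable_filt_gens: "f \<in> filt_gens k \<Longrightarrow> f \<in> measurable M (count_space UNIV)"
  unfolding filt_gens_def Nrisk1_def by (auto; measurable)

lemma finite_range_filt_gens: "f \<in> filt_gens k \<Longrightarrow> finite (f ` space M)"
  by (rule finite_subset[of _ "{..n}"])
    (auto simp: filt_gens_def Nrisk1_le intro: le_trans[OF of_bool_less_eq_one])

lemma subalgebra_filt: "subalgebra M (gen_sigma M (filt_gens k))"
  by (rule subalgebra_gen_sigma[OF measurable_filt_gens])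

lemma measurable_counts_filt:
  assumes "1 \<le> q" "q \<le> k + 1"
  shows "N q \<in> measurable (gen_sigma M (filt_gens k)) (count_space UNIV)"
    and "D q \<in> measurable (gen_sigma M (filt_gens k)) (count_space UNIV)"
    and "N1 q \<in> measurable (gen_sigma M (filt_gens k)) (count_space UNIV)"
    and "D1 (q - 1) \<in> measurable (gen_sigma M (filt_gens k)) (count_space UNIV)"
proof -
  have [measurable]:
    "\<And>i. i < n \<Longrightarrow> Measurable.pred (gen_sigma M (filt_gens k)) (\<lambda>\<omega>. t q \<le> W \<omega> i)"
    "\<And>i. i < n \<Longrightarrow> Measurable.pred (gen_sigma M (filt_gens k)) (\<lambda>\<omega>. Del \<omega> i \<and> W \<omega> i = t q)"
    "\<And>i. i < n \<Longrightarrow> Measurable.pred (gen_sigma M (filt_gens k))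
       (\<lambda>\<omega>. Z i \<omega> \<and> Del \<omega> i \<and> W \<omega> i = t (q - 1))"
    using assms by (auto intro!: pred_gen_sigma simp: filt_gens_def)
  show "N q \<in> measurable (gen_sigma M (filt_gens k)) (count_space UNIV)"
    unfolding Nrisk_eq_card by measurable
  show "D q \<in> measurable (gen_sigma M (filt_gens k)) (count_space UNIV)"
    unfolding Dev_def by measurable
  show "N1 q \<in> measurable (gen_sigma M (filt_gens k)) (count_space UNIV)"
    using assms by (intro measurable_gen_sigma) (auto simp: filt_gens_def)
  show "D1 (q - 1) \<in> measurable (gen_sigma M (filt_gens k)) (count_space UNIV)"
    unfolding Dev1_def by measurable
qed

lemma integrable_counts:
  fixes g :: "nat \<Rightarrow> nat \<Rightarrow> nat \<Rightarrow> nat \<Rightarrow> real"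
  assumes "1 \<le> k"
  shows "integrable M (\<lambda>\<omega>. g (N k \<omega>) (D k \<omega>) (N1 k \<omega>) (D1 k \<omega>))"
proof (rule integrable_finite_range)
  have [measurable]: "N k \<in> measurable (gen_sigma M (filt_gens k)) (count_space UNIV)"
    "D k \<in> measurable (gen_sigma M (filt_gens k)) (count_space UNIV)"
    "N1 k \<in> measurable (gen_sigma M (filt_gens k)) (count_space UNIV)"
    "D1 k \<in> measurable (gen_sigma M (filt_gens k)) (count_space UNIV)"
    using measurable_counts_filt[of k k] measurable_counts_filt(4)[of "k + 1" k] assms by auto
  have "(\<lambda>\<omega>. g (N k \<omega>) (D k \<omega>) (N1 k \<omega>) (D1 k \<omega>)) \<in> borel_measurable (gen_sigma M (filt_gens k))"
    by measurable
  then show "(\<lambda>\<omega>. g (N k \<omega>) (D k \<omega>) (N1 k \<omega>) (D1 k \<omega>)) \<in> borel_measurable M"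
    by (rule measurable_from_subalg[OF subalgebra_filt])
  have "(\<lambda>\<omega>. g (N k \<omega>) (D k \<omega>) (N1 k \<omega>) (D1 k \<omega>)) ` space M
      \<subseteq> (\<lambda>(a, b, c, d). g a b c d) ` ({..n} \<times> {..n} \<times> {..n} \<times> {..n})"
  proof (rule image_subsetI)
    fix \<omega>
    show "g (N k \<omega>) (D k \<omega>) (N1 k \<omega>) (D1 k \<omega>) \<in> (\<lambda>(a, b, c, d). g a b c d) ` ({..n} \<times> {..n} \<times> {..n} \<times> {..n})"
      by (rule image_eqI[where x="(N k \<omega>, D k \<omega>, N1 k \<omega>, D1 k \<omega>)"])
        (simp_all add: Nrisk_le Dev_le Nrisk1_le Dev1_le)
  qed
  then show "finite ((\<lambda>\<omega>. g (N k \<omega>) (D k \<omega>) (N1 k \<omega>) (D1 k \<omega>)) ` space M)"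
    by (rule finite_subset) simp
qed

end

section \<open>An atom of the filtration\<close>

locale filt_atom = null_censored_trial +
  fixes k :: nat and \<omega>0 :: 'a
  assumes k_pos: "1 \<le> k" and k_le: "k \<le> Kdist n T0" and \<omega>0: "\<omega>0 \<in> space M"
begin

abbreviation E :: "'a set" where "E \<equiv> gen_atom M (filt_gens (k - 1)) \<omega>0"

definition risk_set :: "nat set" where "risk_set = {i\<in>{..<n}. t k \<le> W \<omega>0 i}"
definition out_set :: "nat set" where "out_set = {..<n} - risk_set"
definition m :: nat where "m = N1 k \<omega>0"
definition event_set :: "nat set" where "event_set = {i\<in>risk_set. ereal (T0 i) = t k}"
definition treated :: "'a \<Rightarrow> nat set" where "treated \<omega> = {i\<in>risk_set. Z i \<omega>}"

definition agrees_at :: "nat \<Rightarrow> nat \<Rightarrow> 'a \<Rightarrow> bool" where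
  "agrees_at q i \<omega> \<longleftrightarrow> (t q \<le> W \<omega> i \<longleftrightarrow> t q \<le> W \<omega>0 i)
     \<and> (Del \<omega> i \<and> W \<omega> i = t q \<longleftrightarrow> Del \<omega>0 i \<and> W \<omega>0 i = t q)
     \<and> (Z i \<omega> \<and> Del \<omega> i \<and> W \<omega> i = t (q - 1) \<longleftrightarrow> Z i \<omega>0 \<and> Del \<omega>0 i \<and> W \<omega>0 i = t (q - 1))"

lemma finite_risk_set [simp]: "finite risk_set"
  unfolding risk_set_def by simp

lemma finite_out_set [simp]: "finite out_set"
  unfolding out_set_def by simp

lemma t_less: "q < k \<Longrightarrow> t q < t k"
  using tpt_strict_mono k_le by blast

lemma t_le: "q \<le> k \<Longrightarrow> t q \<le> t k"
  using t_less[of q] by (cases "q = k") auto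

lemma record_at_risk:
  assumes i: "i < n" and at_risk: "t k \<le> W \<omega> i" and q: "q \<in> {1..k}"
  shows "t q \<le> W \<omega> i"
    and "Del \<omega> i \<and> W \<omega> i = t q \<longleftrightarrow> q = k \<and> ereal (T0 i) = t k"
    and "\<not> (Z i \<omega> \<and> Del \<omega> i \<and> W \<omega> i = t (q - 1))"
proof -
  show "t q \<le> W \<omega> i" using t_le[of q] q at_risk by auto
  have "Del \<omega> i \<and> W \<omega> i = t k \<longleftrightarrow> ereal (T0 i) = t k"
    using at_risk W_eq[OF i, of \<omega>] Del_eq[OF i, of \<omega>] by (auto simp: min_def split: if_splits)
  moreover have "t q < t k" if "q \<noteq> k" using that q by (intro t_less) auto
  ultimately show "Del \<omega> i \<and> W \<omega> i = t q \<longleftrightarrow> q = k \<and> ereal (T0 i) = t k"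
    using at_risk by (cases "q = k") auto
  have "t (q - 1) < t k" using q k_pos by (intro t_less) auto
  then show "\<not> (Z i \<omega> \<and> Del \<omega> i \<and> W \<omega> i = t (q - 1))" using at_risk by auto
qed

lemma atom_iff:
  "\<omega> \<in> E \<longleftrightarrow> \<omega> \<in> space M \<and> (\<forall>q\<in>{1..k}. \<forall>i\<in>{..<n}. agrees_at q i \<omega>) \<and> (\<forall>q\<in>{1..k}. N1 q \<omega> = N1 q \<omega>0)"
proof -
  have "k - 1 + 1 = k" using k_pos by simp
  then show ?thesis
    unfolding gen_atom_def filt_gens_def agrees_at_def
    by (simp add: ball_Un ball_UN of_bool_eq_iff)
qed

lemma sets_atom: "E \<in> events"
  by (rule sets_gen_atom[OF finite_filt_gens measurable_filt_gens])

lemma \<omega>0_in_atom: "\<omega>0 \<in> E"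
  using \<omega>0 unfolding gen_atom_def by simp

lemma agrees_at_risk_iff:
  assumes i: "i \<in> risk_set"
  shows "(\<forall>q\<in>{1..k}. agrees_at q i \<omega>) \<longleftrightarrow> t k \<le> W \<omega> i"
proof
  assume "\<forall>q\<in>{1..k}. agrees_at q i \<omega>"
  then have "agrees_at k i \<omega>" using k_pos by auto
  then show "t k \<le> W \<omega> i" using i unfolding agrees_at_def risk_set_def by auto
next
  assume at_risk: "t k \<le> W \<omega> i"
  have "i < n" and at_risk0: "t k \<le> W \<omega>0 i" using i unfolding risk_set_def by auto
  show "\<forall>q\<in>{1..k}. agrees_at q i \<omega>"
  proof
    fix q assume q: "q \<in> {1..k}"
    show "agrees_at q i \<omega>"
      using record_at_risk[OF \<open>i < n\<close> at_risk q] record_at_risk[OF \<open>i < n\<close> at_risk0 q]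
      unfolding agrees_at_def by blast
  qed
qed

lemma atom_at_risk_iff:
  assumes "\<omega> \<in> E" "i < n"
  shows "t k \<le> W \<omega> i \<longleftrightarrow> i \<in> risk_set"
proof -
  have "agrees_at k i \<omega>" using assms k_pos unfolding atom_iff by auto
  then show ?thesis using assms(2) unfolding agrees_at_def risk_set_def by auto
qed

lemma atom_event_iff:
  assumes "\<omega> \<in> E" "i < n"
  shows "Del \<omega> i \<and> W \<omega> i = t k \<longleftrightarrow> i \<in> event_set"
proof (cases "t k \<le> W \<omega> i")
  case True
  then show ?thesis
    using atom_at_risk_iff[OF assms] record_at_risk(2)[OF assms(2) True, of k] k_pos
    unfolding event_set_def by auto
next
  case False
  then show ?thesis using atom_at_risk_iff[OF assms] unfolding event_set_def by auto
qed

lemma N1_split_risk_set: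
  assumes at_risk: "\<forall>i\<in>risk_set. t k \<le> W \<omega> i" and q: "q \<in> {1..k}"
  shows "N1 q \<omega> = card (treated \<omega>) + card {i\<in>out_set. Z i \<omega> \<and> t q \<le> W \<omega> i}"
proof -
  have "t q \<le> W \<omega> i" if "i \<in> risk_set" for i
    using t_le[of q] q at_risk that by (meson atLeastAtMost_iff order.trans)
  then have "{i\<in>{..<n}. Z i \<omega> \<and> t q \<le> W \<omega> i} = treated \<omega> \<union> {i\<in>out_set. Z i \<omega> \<and> t q \<le> W \<omega> i}"
    unfolding treated_def out_set_def risk_set_def by auto
  moreover have "treated \<omega> \<inter> {i\<in>out_set. Z i \<omega> \<and> t q \<le> W \<omega> i} = {}"
    unfolding treated_def out_set_def by auto
  ultimately show ?thesis
    unfolding Nrisk1_def by (simp add: card_Un_disjoint treated_def)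
qed

lemma counts_on_atom:
  assumes "\<omega> \<in> E"
  shows "card (treated \<omega>) = m" and "D1 k \<omega> = card (treated \<omega> \<inter> event_set)"
    and "D k \<omega> = card event_set" and "N1 k \<omega> = m" and "N k \<omega> = card risk_set"
proof -
  have "risk_set \<subseteq> {..<n}" "event_set \<subseteq> risk_set"
    unfolding risk_set_def event_set_def by auto
  then have at_risk: "\<forall>i\<in>risk_set. t k \<le> W \<omega> i" and no_treated_out: "{i\<in>out_set. Z i \<omega> \<and> t k \<le> W \<omega> i} = {}"
    using atom_at_risk_iff[OF assms] unfolding out_set_def by auto
  have "N1 k \<omega> = card (treated \<omega>)"
    using N1_split_risk_set[OF at_risk, of k] k_pos no_treated_out by simp
  moreover have "N1 k \<omega> = N1 k \<omega>0" using assms k_pos unfolding atom_iff by auto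
  ultimately show "card (treated \<omega>) = m" "N1 k \<omega> = m" unfolding m_def by auto
  have "{i\<in>{..<n}. Z i \<omega> \<and> Del \<omega> i \<and> W \<omega> i = t k} = treated \<omega> \<inter> event_set"
    using atom_event_iff[OF assms] \<open>event_set \<subseteq> risk_set\<close> \<open>risk_set \<subseteq> {..<n}\<close>
    unfolding treated_def by auto
  then show "D1 k \<omega> = card (treated \<omega> \<inter> event_set)" unfolding Dev1_def by simp
  have "{i\<in>{..<n}. Del \<omega> i \<and> W \<omega> i = t k} = event_set"
    using atom_event_iff[OF assms] \<open>event_set \<subseteq> risk_set\<close> \<open>risk_set \<subseteq> {..<n}\<close> by auto
  then show "D k \<omega> = card event_set" unfolding Dev_def by simp
  have "{i\<in>{..<n}. t k \<le> W \<omega> i} = risk_set"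
    using atom_at_risk_iff[OF assms] \<open>risk_set \<subseteq> {..<n}\<close> by auto
  then show "N k \<omega> = card risk_set" unfolding Nrisk_eq_card by simp
qed

text \<open>The trace of the atom on the units out of risk at t_k, the m treated units at
  risk being accounted for in the counts N1.\<close>
definition out_event :: "'a set" where
  "out_event = {\<omega>\<in>space M. (\<forall>i\<in>out_set. \<forall>q\<in>{1..k}. agrees_at q i \<omega>)
      \<and> (\<forall>q\<in>{1..k}. card {i\<in>out_set. Z i \<omega> \<and> t q \<le> W \<omega> i} + m = N1 q \<omega>0)}"

definition cens_survives :: "bool \<Rightarrow> (ereal \<times> ereal) set" where
  "cens_survives v = {c. t k \<le> (if v then fst c else snd c)}"

definition risk_event :: "nat \<Rightarrow> nat set \<Rightarrow> 'a set" where
  "risk_event i z = Z i -` {i \<in> z} \<inter> cens i -` cens_survives (i \<in> z) \<inter> space M"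

lemma risk_event_iff:
  assumes i: "i \<in> risk_set" and \<omega>: "\<omega> \<in> space M"
  shows "\<omega> \<in> risk_event i z \<longleftrightarrow> Z i \<omega> = (i \<in> z) \<and> t k \<le> W \<omega> i"
proof -
  have "i < n" "t k \<le> ereal (T0 i)" using i W_eq unfolding risk_set_def by auto
  then have "t k \<le> W \<omega> i \<longleftrightarrow> t k \<le> cens_obs i \<omega>" using W_eq by simp
  then show ?thesis using \<omega> unfolding risk_event_def cens_survives_def cens_obs_def cens_def by auto
qed

lemma atom_subset_out_risk_events:
  assumes \<omega>: "\<omega> \<in> E"
  shows "\<omega> \<in> out_event \<inter> (\<Inter>i\<in>risk_set. risk_event i (treated \<omega>))"
proof -
  have sp: "\<omega> \<in> space M" using \<omega> unfolding gen_atom_def by blast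
  have at_risk: "\<forall>i\<in>risk_set. t k \<le> W \<omega> i"
    using atom_at_risk_iff[OF \<omega>] unfolding risk_set_def by auto
  have "\<forall>i\<in>out_set. \<forall>q\<in>{1..k}. agrees_at q i \<omega>"
    using \<omega> unfolding atom_iff out_set_def by blast
  moreover have "card {i\<in>out_set. Z i \<omega> \<and> t q \<le> W \<omega> i} + m = N1 q \<omega>0" if "q \<in> {1..k}" for q
    using N1_split_risk_set[OF at_risk that] \<omega> that counts_on_atom(1)[OF \<omega>] unfolding atom_iff by auto
  ultimately have "\<omega> \<in> out_event" using sp unfolding out_event_def by blast
  moreover have "\<omega> \<in> risk_event i (treated \<omega>)" if "i \<in> risk_set" for i
    using risk_event_iff[OF that sp] at_risk that unfolding treated_def by blast
  ultimately show ?thesis by blast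
qed

lemma out_risk_events_subset_atom:
  assumes z: "z \<subseteq> risk_set" "card z = m"
    and \<omega>: "\<omega> \<in> out_event \<inter> (\<Inter>i\<in>risk_set. risk_event i z)"
  shows "\<omega> \<in> E" and "treated \<omega> = z"
proof -
  have sp: "\<omega> \<in> space M" using \<omega> unfolding out_event_def by blast
  have "Z i \<omega> = (i \<in> z) \<and> t k \<le> W \<omega> i" if "i \<in> risk_set" for i
    using risk_event_iff[OF that sp] \<omega> that by blast
  then have tr: "treated \<omega> = z" and at_risk: "\<forall>i\<in>risk_set. t k \<le> W \<omega> i"
    using z(1) unfolding treated_def by auto
  then show "treated \<omega> = z" by blast
  have "agrees_at q i \<omega>" if "q \<in> {1..k}" "i \<in> {..<n}" for q i
  proof (cases "i \<in> risk_set")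
    case True
    then show ?thesis using agrees_at_risk_iff[OF True] at_risk that(1) by blast
  next
    case False
    then show ?thesis using \<omega> that unfolding out_event_def out_set_def by blast
  qed
  moreover have "N1 q \<omega> = N1 q \<omega>0" if q: "q \<in> {1..k}" for q
  proof -
    have "card {i\<in>out_set. Z i \<omega> \<and> t q \<le> W \<omega> i} + m = N1 q \<omega>0"
      using \<omega> q unfolding out_event_def by blast
    then show ?thesis using N1_split_risk_set[OF at_risk q] tr z(2) by simp
  qed
  ultimately show "\<omega> \<in> E" unfolding atom_iff using sp by blast
qed

lemma atom_treated_eq:
  assumes z: "z \<subseteq> risk_set" "card z = m"
  shows "E \<inter> {\<omega>. treated \<omega> = z} = out_event \<inter> (\<Inter>i\<in>risk_set. risk_event i z)"
  using atom_subset_out_risk_events out_risk_events_subset_atom[OF z] by blast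

lemma out_event_sigma: "out_event \<in> sigma_sets (space M) (\<Union>i\<in>out_set. unit_events i)"
proof -
  let ?S = "sigma (space M) (\<Union>i\<in>out_set. unit_events i)"
  have sub: "(\<Union>i\<in>out_set. unit_events i) \<subseteq> Pow (space M)"
    unfolding unit_events_def by blast
  have [measurable]: "\<And>i. i \<in> out_set \<Longrightarrow> Z i \<in> measurable ?S (count_space UNIV)"
    "\<And>i. i \<in> out_set \<Longrightarrow> (\<lambda>\<omega>. W \<omega> i) \<in> borel_measurable ?S"
    "\<And>i. i \<in> out_set \<Longrightarrow> Measurable.pred ?S (\<lambda>\<omega>. Del \<omega> i)"
    using measurable_unit_sigma measurable_W_Del[OF measurable_unit_sigma] by auto
  have "{\<omega>\<in>space ?S. (\<forall>i\<in>out_set. \<forall>q\<in>{1..k}. agrees_at q i \<omega>)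
      \<and> (\<forall>q\<in>{1..k}. card {i\<in>out_set. Z i \<omega> \<and> t q \<le> W \<omega> i} + m = N1 q \<omega>0)} \<in> sets ?S"
    unfolding agrees_at_def by measurable
  then show ?thesis unfolding out_event_def sets_measure_of[OF sub] space_measure_of[OF sub] .
qed

lemma sets_cens_survives: "cens_survives v \<in> sets borel"
proof -
  have "closed (cens_survives v)"
    unfolding cens_survives_def by (cases v) (auto intro!: closed_Collect_le continuous_intros)
  then show ?thesis by (rule borel_closed)
qed

lemma prob_out_risk_events:
  "prob (out_event \<inter> (\<Inter>i\<in>risk_set. risk_event i z)) = prob out_event * (\<Prod>i\<in>risk_set. prob (risk_event i z))"
proof -
  define I where "I j = (case j of None \<Rightarrow> out_set | Some i \<Rightarrow> {i})" for j :: "nat option"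
  define J where "J = insert None (Some ` risk_set)"
  define S where "S j = (case j of None \<Rightarrow> out_event | Some i \<Rightarrow> risk_event i z)" for j :: "nat option"
  have "risk_set \<subseteq> {..<n}" unfolding risk_set_def by auto
  then have "(\<Union>j\<in>J. I j) \<subseteq> {..<n}" unfolding I_def J_def out_set_def by auto
  then have "indep_sets unit_events (\<Union>j\<in>J. I j)"
    by (rule indep_sets_mono_index[OF _ indep_unit_events])
  moreover have "disjoint_family_on I J"
    unfolding disjoint_family_on_def I_def J_def out_set_def by (auto split: option.splits)
  ultimately have indep: "indep_sets (\<lambda>j. sigma_sets (space M) (\<Union>i\<in>I j. unit_events i)) J"
    by (rule indep_sets_collect_sigma[OF _ Int_stable_unit_events])
  have "S j \<in> sigma_sets (space M) (\<Union>i\<in>I j. unit_events i)" if "j \<in> J" for j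
  proof (cases j)
    case None
    then show ?thesis unfolding S_def I_def using out_event_sigma by simp
  next
    case (Some i)
    then have "risk_event i z \<in> unit_events i"
      unfolding risk_event_def unit_events_def using sets_cens_survives by blast
    then show ?thesis unfolding S_def I_def using Some by (auto intro: sigma_sets.Basic)
  qed
  then have "prob (\<Inter>j\<in>J. S j) = (\<Prod>j\<in>J. prob (S j))"
    by (intro indep_setsD[OF indep]) (auto simp: J_def)
  moreover have "(\<Inter>j\<in>J. S j) = out_event \<inter> (\<Inter>i\<in>risk_set. risk_event i z)"
    unfolding J_def S_def by auto
  moreover have "(\<Prod>j\<in>J. prob (S j)) = prob out_event * (\<Prod>i\<in>risk_set. prob (risk_event i z))"
    unfolding J_def S_def by (simp add: prod.reindex)
  ultimately show ?thesis by simp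
qed

definition config_prob :: real where
  "config_prob = prob out_event
     * (p1 * measure (distr M borel (cens 0)) (cens_survives True)) ^ m
     * ((1 - p1) * measure (distr M borel (cens 0)) (cens_survives False)) ^ (card risk_set - m)"

text \<open>The value does not depend on z: this exchangeability of the units at risk is
  where the null hypothesis enters.\<close>
lemma prob_atom_treated:
  assumes z: "z \<subseteq> risk_set" "card z = m"
  shows "prob (E \<inter> {\<omega>. treated \<omega> = z}) = config_prob"
proof -
  let ?\<alpha> = "p1 * measure (distr M borel (cens 0)) (cens_survives True)"
  let ?\<beta> = "(1 - p1) * measure (distr M borel (cens 0)) (cens_survives False)"
  have "prob (risk_event i z) = (if i \<in> z then ?\<alpha> else ?\<beta>)" if "i \<in> risk_set" for i
    using that prob_unit_event[OF _ sets_cens_survives, of i "i \<in> z" "i \<in> z"]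
    unfolding risk_event_def risk_set_def by simp
  then have "(\<Prod>i\<in>risk_set. prob (risk_event i z)) = (\<Prod>i\<in>risk_set. if i \<in> z then ?\<alpha> else ?\<beta>)"
    by (intro prod.cong) auto
  also have "\<dots> = ?\<alpha> ^ card (risk_set \<inter> z) * ?\<beta> ^ card (risk_set - z)"
    by (simp add: prod.If_cases Diff_eq)
  also have "risk_set \<inter> z = z" using z(1) by blast
  also have "card (risk_set - z) = card risk_set - m"
    using z by (simp add: card_Diff_subset finite_subset)
  finally show ?thesis
    unfolding atom_treated_eq[OF z] prob_out_risk_events config_prob_def using z(2) by simp
qed

lemma sets_atom_treated:
  assumes "z \<subseteq> risk_set"
  shows "E \<inter> {\<omega>. treated \<omega> = z} \<in> events"
proof -
  have "risk_set \<subseteq> {..<n}" unfolding risk_set_def by auto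
  then have [measurable]: "\<And>i. i \<in> risk_set \<Longrightarrow> Z i \<in> measurable M (count_space UNIV)"
    by auto
  have "treated \<omega> = z \<longleftrightarrow> (\<forall>i\<in>risk_set. Z i \<omega> = (i \<in> z))" for \<omega>
    using assms unfolding treated_def by auto
  then have "E \<inter> {\<omega>. treated \<omega> = z} = E \<inter> {\<omega>\<in>space M. \<forall>i\<in>risk_set. Z i \<omega> = (i \<in> z)}"
    using sets.sets_into_space[OF sets_atom] by auto
  also have "\<dots> \<in> events" using sets_atom by measurable
  finally show ?thesis .
qed

text \<open>Conditionally on the atom, the set of treated units at risk is uniformly
  distributed over the subsets of the risk set of the right size.\<close>
lemma set_integral_atom:
  fixes \<phi> :: "nat set \<Rightarrow> real"
  shows "(LINT \<omega>:E|M. \<phi> (treated \<omega>)) = config_prob * (\<Sum>z | z \<subseteq> risk_set \<and> card z = m. \<phi> z)"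
proof -
  let ?Zs = "{z. z \<subseteq> risk_set \<and> card z = m}"
  have fin: "finite ?Zs" by (rule finite_subset[of _ "Pow risk_set"]) auto
  have E_eq: "(\<Union>z\<in>?Zs. E \<inter> {\<omega>. treated \<omega> = z}) = E"
    using counts_on_atom(1) by (auto simp: treated_def)
  have pieces: "(LINT \<omega>:E \<inter> {\<omega>. treated \<omega> = z}|M. \<phi> (treated \<omega>)) = config_prob * \<phi> z"
    and integrable: "set_integrable M (E \<inter> {\<omega>. treated \<omega> = z}) (\<lambda>\<omega>. \<phi> (treated \<omega>))"
    if "z \<in> ?Zs" for z
  proof -
    have sets: "E \<inter> {\<omega>. treated \<omega> = z} \<in> events" using that by (intro sets_atom_treated) auto
    have "(LINT \<omega>:E \<inter> {\<omega>. treated \<omega> = z}|M. \<phi> (treated \<omega>)) = (LINT \<omega>:E \<inter> {\<omega>. treated \<omega> = z}|M. \<phi> z)"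
      using sets by (intro set_lebesgue_integral_cong) auto
    also have "\<dots> = config_prob * \<phi> z"
      using that prob_atom_treated sets by (simp add: set_integral_const)
    finally show "(LINT \<omega>:E \<inter> {\<omega>. treated \<omega> = z}|M. \<phi> (treated \<omega>)) = config_prob * \<phi> z" .
    have "set_integrable M (E \<inter> {\<omega>. treated \<omega> = z}) (\<lambda>_. \<phi> z)"
      unfolding set_integrable_def using sets by (intro integrable_mult_indicator) auto
    then show "set_integrable M (E \<inter> {\<omega>. treated \<omega> = z}) (\<lambda>\<omega>. \<phi> (treated \<omega>))"
      by (rule set_integrable_cong[THEN iffD1, rotated -1]) auto
  qed
  have "(LINT \<omega>:(\<Union>z\<in>?Zs. E \<inter> {\<omega>. treated \<omega> = z})|M. \<phi> (treated \<omega>))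
      = (\<Sum>z\<in>?Zs. LINT \<omega>:E \<inter> {\<omega>. treated \<omega> = z}|M. \<phi> (treated \<omega>))"
    using fin integrable sets_atom_treated
    by (intro set_integral_finite_Union) (auto simp: disjoint_family_on_def)
  also have "\<dots> = (\<Sum>z\<in>?Zs. config_prob * \<phi> z)" by (intro sum.cong refl pieces)
  finally show ?thesis unfolding E_eq by (simp add: sum_distrib_left)
qed

lemma atom_hypergeometric:
  "(LINT \<omega>:E|M. of_bool (D1 k \<omega> = j)) = (LINT \<omega>:E|M. hgeom_pmf (N k \<omega>) (D k \<omega>) (N1 k \<omega>) j)"
proof -
  let ?H = "hgeom_pmf (card risk_set) (card event_set) m j"
  have sub: "event_set \<subseteq> risk_set" unfolding event_set_def by auto
  have m: "m \<le> card risk_set"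
    using counts_on_atom(1)[OF \<omega>0_in_atom] by (metis card_mono finite_risk_set mem_Collect_eq subsetI treated_def)
  have "(LINT \<omega>:E|M. of_bool (D1 k \<omega> = j)) = (LINT \<omega>:E|M. of_bool (card (treated \<omega> \<inter> event_set) = j))"
    using sets_atom counts_on_atom(2) by (intro set_lebesgue_integral_cong) auto
  also have "\<dots> = config_prob * real (card {z. z \<subseteq> risk_set \<and> card z = m \<and> card (z \<inter> event_set) = j})"
    unfolding set_integral_atom[of "\<lambda>z. of_bool (card (z \<inter> event_set) = j)"]
    by (simp add: Collect_conj_eq Int_assoc)
  also have "\<dots> = config_prob * (real (card risk_set choose m) * ?H)"
    by (simp add: card_subsets_Int_card_hgeom[OF finite_risk_set sub m])
  also have "\<dots> = (LINT \<omega>:E|M. ?H)"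
    unfolding set_integral_atom[of "\<lambda>_. ?H"] by (simp add: n_subsets)
  also have "\<dots> = (LINT \<omega>:E|M. hgeom_pmf (N k \<omega>) (D k \<omega>) (N1 k \<omega>) j)"
    using sets_atom counts_on_atom by (intro set_lebesgue_integral_cong) auto
  finally show ?thesis .
qed

lemma atom_centered:
  "(LINT \<omega>:E|M. real (D1 k \<omega>) - Mk k \<omega>) = 0"
proof -
  have "event_set \<subseteq> risk_set" unfolding event_set_def by auto
  have "(LINT \<omega>:E|M. real (D1 k \<omega>) - Mk k \<omega>)
      = (LINT \<omega>:E|M. real (card (treated \<omega> \<inter> event_set)) - real (card event_set) * real m / real (card risk_set))"
    using sets_atom counts_on_atom by (intro set_lebesgue_integral_cong) (auto simp: Mexp_def)
  also have "\<dots> = 0"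
    unfolding set_integral_atom[of "\<lambda>z. real (card (z \<inter> event_set)) - real (card event_set) * real m / real (card risk_set)"]
    using sum_subsets_card_Int_centered[OF finite_risk_set \<open>event_set \<subseteq> risk_set\<close>] by simp
  finally show ?thesis .
qed

end

context null_censored_trial
begin

lemma filt_atomI:
  assumes "1 \<le> k" "k \<le> Kdist n T0" "\<omega>0 \<in> space M"
  shows "filt_atom M n p1 T1 T0 Z C1 C0 W Del k \<omega>0"
  using assms by unfold_locales

lemma real_cond_exp_centered:
  assumes k: "1 \<le> k" "k \<le> Kdist n T0"
  shows "AE \<omega> in M. real_cond_exp M (gen_sigma M (filt_gens (k - 1)))
           (\<lambda>\<omega>. real (D1 k \<omega>) - Mk k \<omega>) \<omega> = 0"
proof (rule real_cond_exp_gen_sigma[OF prob_space_axioms finite_filt_gens measurable_filt_gens finite_range_filt_gens])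
  show "integrable M (\<lambda>\<omega>. real (D1 k \<omega>) - Mk k \<omega>)"
    using integrable_counts[OF k(1), of "\<lambda>a b c d. real d - real b * real c / real a"]
    by (simp add: Mexp_def)
  fix \<omega>0 assume "\<omega>0 \<in> space M"
  then interpret filt_atom M n p1 T1 T0 Z C1 C0 W Del k \<omega>0 by (rule filt_atomI[OF k])
  show "(LINT \<omega>:E|M. real (D1 k \<omega>) - Mk k \<omega>) = (LINT \<omega>:E|M. 0)"
    using atom_centered by simp
qed simp_all

lemma real_cond_exp_hypergeometric:
  assumes k: "1 \<le> k" "k \<le> Kdist n T0"
  shows "AE \<omega> in M. real_cond_exp M (gen_sigma M (filt_gens (k - 1))) (\<lambda>\<omega>. of_bool (D1 k \<omega> = j)) \<omega>
           = hgeom_pmf (N k \<omega>) (D k \<omega>) (N1 k \<omega>) j"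
proof (rule real_cond_exp_gen_sigma[OF prob_space_axioms finite_filt_gens measurable_filt_gens finite_range_filt_gens])
  show "integrable M (\<lambda>\<omega>. of_bool (D1 k \<omega> = j) :: real)"
    using integrable_counts[OF k(1), of "\<lambda>a b c d. of_bool (d = j)"] by simp
  show "integrable M (\<lambda>\<omega>. hgeom_pmf (N k \<omega>) (D k \<omega>) (N1 k \<omega>) j)"
    using integrable_counts[OF k(1), of "\<lambda>a b c d. hgeom_pmf a b c j"] by simp
  have [measurable]: "N k \<in> measurable (gen_sigma M (filt_gens (k - 1))) (count_space UNIV)"
    "D k \<in> measurable (gen_sigma M (filt_gens (k - 1))) (count_space UNIV)"
    "N1 k \<in> measurable (gen_sigma M (filt_gens (k - 1))) (count_space UNIV)"
    using measurable_counts_filt[of k "k - 1"] k by auto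
  show "(\<lambda>\<omega>. hgeom_pmf (N k \<omega>) (D k \<omega>) (N1 k \<omega>) j) \<in> borel_measurable (gen_sigma M (filt_gens (k - 1)))"
    by measurable
  fix \<omega>0 assume "\<omega>0 \<in> space M"
  then interpret filt_atom M n p1 T1 T0 Z C1 C0 W Del k \<omega>0 by (rule filt_atomI[OF k])
  show "(LINT \<omega>:E|M. of_bool (D1 k \<omega> = j)) = (LINT \<omega>:E|M. hgeom_pmf (N k \<omega>) (D k \<omega>) (N1 k \<omega>) j)"
    by (rule atom_hypergeometric)
qed

lemma mds_filt:
  "mds M (filt M n T0 Z W Del)
     (\<lambda>k \<omega>. real (D1 k \<omega>) - Mk k \<omega>) (Kdist n T0)"
  unfolding mds_def filt_eq
proof (intro conjI allI impI ballI)
  fix k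
  show "subalgebra M (gen_sigma M (filt_gens k))" by (rule subalgebra_filt)
  show "sets (gen_sigma M (filt_gens k)) \<subseteq> sets (gen_sigma M (filt_gens (Suc k)))"
    by (rule sets_gen_sigma_mono[OF filt_gens_mono]) simp
next
  fix k assume k: "k \<in> {1..Kdist n T0}"
  have [measurable]: "N k \<in> measurable (gen_sigma M (filt_gens k)) (count_space UNIV)"
    "D k \<in> measurable (gen_sigma M (filt_gens k)) (count_space UNIV)"
    "N1 k \<in> measurable (gen_sigma M (filt_gens k)) (count_space UNIV)"
    "D1 k \<in> measurable (gen_sigma M (filt_gens k)) (count_space UNIV)"
    using measurable_counts_filt[of k k] measurable_counts_filt(4)[of "k + 1" k] k by auto
  show "(\<lambda>\<omega>. real (D1 k \<omega>) - Mk k \<omega>)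
      \<in> borel_measurable (gen_sigma M (filt_gens k))"
    unfolding Mexp_def by measurable
  show "integrable M (\<lambda>\<omega>. real (D1 k \<omega>) - Mk k \<omega>)"
    using integrable_counts[of k "\<lambda>a b c d. real d - real b * real c / real a"] k
    by (simp add: Mexp_def)
  show "AE \<omega> in M. real_cond_exp M (gen_sigma M (filt_gens (k - 1)))
      (\<lambda>\<omega>. real (D1 k \<omega>) - Mk k \<omega>) \<omega> = 0"
    using real_cond_exp_centered k by simp
qed

end

theorem theorem2:
  fixes M :: "'a measure" and n :: nat and p1 :: real
    and T1 T0 :: "nat \<Rightarrow> real"
    and Z :: "nat \<Rightarrow> 'a \<Rightarrow> bool"
    and C1 C0 :: "nat \<Rightarrow> 'a \<Rightarrow> ereal"
    and W :: "'a \<Rightarrow> nat \<Rightarrow> ereal" and Del :: "'a \<Rightarrow> nat \<Rightarrow> bool"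
    and F :: "nat \<Rightarrow> 'a measure" and K :: nat
  assumes M: "prob_space M"
    and p1: "0 < p1" "p1 < 1"
    and Tnn: "\<And>i. i < n \<Longrightarrow> 0 \<le> T1 i" "\<And>i. i < n \<Longrightarrow> 0 \<le> T0 i"
    and H0: "\<And>i. i < n \<Longrightarrow> T1 i = T0 i"
    and Cnn: "\<And>i \<omega>. i < n \<Longrightarrow> \<omega> \<in> space M \<Longrightarrow> 0 \<le> C1 i \<omega> \<and> 0 \<le> C0 i \<omega>"
    and Zmeas: "\<And>i. i < n \<Longrightarrow> Z i \<in> measurable M (count_space UNIV)"
    and Cmeas: "\<And>i. i < n \<Longrightarrow> (\<lambda>\<omega>. (C1 i \<omega>, C0 i \<omega>)) \<in> borel_measurable M"
    and Zind: "prob_space.indep_vars M (\<lambda>_. count_space UNIV) Z {..<n}"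
    and Zbern: "\<And>i. i < n \<Longrightarrow> measure M {\<omega> \<in> space M. Z i \<omega>} = p1"
    and Cind: "prob_space.indep_vars M (\<lambda>_. borel) (\<lambda>i \<omega>. (C1 i \<omega>, C0 i \<omega>)) {..<n}"
    and Cid: "\<And>i. i < n \<Longrightarrow>
       distr M borel (\<lambda>\<omega>. (C1 i \<omega>, C0 i \<omega>)) = distr M borel (\<lambda>\<omega>. (C1 0 \<omega>, C0 0 \<omega>))"
    and ZCind: "prob_space.indep_set M
       {(\<lambda>\<omega>. \<lambda>i\<in>{..<n}. Z i \<omega>) -` A \<inter> space M | A.
          A \<in> sets (Pi\<^sub>M {..<n} (\<lambda>_. count_space UNIV))}
       {(\<lambda>\<omega>. \<lambda>i\<in>{..<n}. (C1 i \<omega>, C0 i \<omega>)) -` B \<inter> space M | B.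
          B \<in> sets (Pi\<^sub>M {..<n} (\<lambda>_. borel))}"
    and W_def: "W \<equiv> \<lambda>\<omega> i. min (ereal (if Z i \<omega> then T1 i else T0 i))
                              (if Z i \<omega> then C1 i \<omega> else C0 i \<omega>)"
    and Del_def: "Del \<equiv> \<lambda>\<omega> i. ereal (if Z i \<omega> then T1 i else T0 i)
                              \<le> (if Z i \<omega> then C1 i \<omega> else C0 i \<omega>)"
    and F_def: "F \<equiv> filt M n T0 Z W Del"
    and K_def: "K \<equiv> Kdist n T0"
  shows "mds M F (\<lambda>k \<omega>. real (Dev1 n (\<lambda>i. Z i \<omega>) (W \<omega>) (Del \<omega>) (tpt n T0 k))
                         - Mexp n (\<lambda>i. Z i \<omega>) (W \<omega>) (Del \<omega>) (tpt n T0 k)) K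
    \<and> (\<forall>k\<in>{1..K}. \<forall>j::nat. AE \<omega> in M.
         real_cond_exp M (F (k - 1))
            (\<lambda>\<omega>. of_bool (Dev1 n (\<lambda>i. Z i \<omega>) (W \<omega>) (Del \<omega>) (tpt n T0 k) = j)) \<omega>
         = hgeom_pmf (Nrisk n (\<lambda>i. Z i \<omega>) (W \<omega>) (tpt n T0 k))
                     (Dev n (W \<omega>) (Del \<omega>) (tpt n T0 k))
                     (Nrisk1 n (\<lambda>i. Z i \<omega>) (W \<omega>) (tpt n T0 k)) j)"
proof -
  interpret null_censored_trial M n p1 T1 T0 Z C1 C0 W Del
  proof (intro null_censored_trial.intro null_censored_trial_axioms.intro)
    show "W = (\<lambda>\<omega> i. min (ereal (if Z i \<omega> then T1 i else T0 i)) (if Z i \<omega> then C1 i \<omega> else C0 i \<omega>))"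
      unfolding W_def ..
    show "Del = (\<lambda>\<omega> i. ereal (if Z i \<omega> then T1 i else T0 i) \<le> (if Z i \<omega> then C1 i \<omega> else C0 i \<omega>))"
      unfolding Del_def ..
  qed (fact M H0 Zmeas Cmeas Zind Zbern Cind Cid ZCind)+
  show ?thesis
    unfolding F_def K_def
    using mds_filt real_cond_exp_hypergeometric[unfolded filt_eq[symmetric]] by auto
qed

end
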